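(* Let $P,K:\mathbb{N}_0\to\mathbb{N}_0$ be a scaling such that $\lim_{n\to\infty}n^3\tau(\theta_n)=0$. Then $\lim_{n\to\infty}\mathbb{P}[T_n(\theta_n)>0]=0$.
   Context: Random key graph: for positive integers $K\le P$, $\theta=(K,P)$ and $n\ge3$, let $K_1(\theta),\dots,K_n(\theta)$ be i.i.d. random subsets of $\{1,\dots,P\}$, each uniform over the $K$-element subsets; the random key graph $\mathbb{K}(n;\theta)$ on $\{1,\dots,n\}$ has an edge between distinct $i,j$ iff $K_i(\theta)\cap K_j(\theta)\ne\emptyset$. $T_n(\theta)$ denotes the number of triangles in $\mathbb{K}(n;\theta)$. $\tau(\theta)=K^3/P^2+(K^2/P)^3$. A scaling is a pair of functions $P,K:\mathbb{N}_0\to\mathbb{N}_0$ with $1\le K_n\le P_n$ for all $n$, and $\theta_n=(K_n,P_n)$. *)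

theory Defs
  imports "HOL-Probability.Probability" "HOL-Probability.Product_PMF"
begin

definition key_pmf :: "nat \<Rightarrow> nat \<Rightarrow> nat set pmf" where
  "key_pmf K P = pmf_of_set {S. S \<subseteq> {1..P} \<and> card S = K}"

definition rkg_pmf :: "nat \<Rightarrow> nat \<Rightarrow> nat \<Rightarrow> (nat \<Rightarrow> nat set) pmf" where
  "rkg_pmf n K P = Pi_pmf {1..n} {} (\<lambda>_. key_pmf K P)"

definition rkg_edge :: "(nat \<Rightarrow> nat set) \<Rightarrow> nat \<Rightarrow> nat \<Rightarrow> bool" where
  "rkg_edge ks i j \<longleftrightarrow> i \<noteq> j \<and> ks i \<inter> ks j \<noteq> {}"

definition triangles :: "nat \<Rightarrow> (nat \<Rightarrow> nat set) \<Rightarrow> nat" where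
  "triangles n ks = card {T. T \<subseteq> {1..n} \<and> card T = 3 \<and>
       (\<forall>i\<in>T. \<forall>j\<in>T. i \<noteq> j \<longrightarrow> rkg_edge ks i j)}"

definition tau :: "nat \<Rightarrow> nat \<Rightarrow> real" where
  "tau K P = real K ^ 3 / real P ^ 2 + (real K ^ 2 / real P) ^ 3"

end

theory Submission
  imports Defs
begin

text \<open>By the union bound, \<open>\<P>[T\<^sub>n > 0]\<close> is at most the number \<open>\<le> n\<^sup>3\<close> of ordered triples of
  distinct vertices times the probability that three fixed key rings pairwise intersect. Three
  pairwise intersecting rings either share a common key \<open>a\<close> (at most \<open>P\<close> choices, probability
  \<open>\<le> (K/P)\<^sup>3\<close>) or there are distinct keys \<open>a, b, c\<close> with each ring containing two of them
  (at most \<open>P\<^sup>3\<close> choices, probability \<open>\<le> ((K/P)\<^sup>2)\<^sup>3\<close>), since a uniform \<open>K\<close>-subset of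
  \<open>{1..P}\<close> contains a fixed \<open>m\<close>-set with probability \<open>\<le> (K/P)\<^sup>m\<close>. Altogether
  \<open>\<P>[T\<^sub>n > 0] \<le> n\<^sup>3 \<tau>(\<theta>\<^sub>n)\<close>.\<close>

lemma card_supsets:
  assumes "finite A" "F \<subseteq> A" "card F \<le> K"
  shows "card {S. (S \<subseteq> A \<and> card S = K) \<and> F \<subseteq> S} = (card A - card F) choose (K - card F)"
proof -
  have "finite F" using assms finite_subset by blast
  have "bij_betw (\<lambda>S. S - F) {S. (S \<subseteq> A \<and> card S = K) \<and> F \<subseteq> S}
          {T. T \<subseteq> A - F \<and> card T = K - card F}"
  proof (rule bij_betw_byWitness[where f'="\<lambda>T. T \<union> F"])
    show "(\<lambda>S. S - F) ` {S. (S \<subseteq> A \<and> card S = K) \<and> F \<subseteq> S} \<subseteq> {T. T \<subseteq> A - F \<and> card T = K - card F}"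
      using \<open>finite F\<close> assms(1) by (auto simp: card_Diff_subset dest: finite_subset)
    show "(\<lambda>T. T \<union> F) ` {T. T \<subseteq> A - F \<and> card T = K - card F} \<subseteq> {S. (S \<subseteq> A \<and> card S = K) \<and> F \<subseteq> S}"
    proof (rule image_subsetI)
      fix T assume "T \<in> {T. T \<subseteq> A - F \<and> card T = K - card F}"
      then have T: "T \<subseteq> A - F" "card T = K - card F" by auto
      then have "finite T" "T \<inter> F = {}" using assms(1) finite_subset by blast+
      then have "card (T \<union> F) = card T + card F" using \<open>finite F\<close> by (simp add: card_Un_disjoint)
      with T(2) assms(3) have "card (T \<union> F) = K" by linarith
      with T assms(2) show "T \<union> F \<in> {S. (S \<subseteq> A \<and> card S = K) \<and> F \<subseteq> S}" by auto
    qed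
  qed blast+
  then have "card {S. (S \<subseteq> A \<and> card S = K) \<and> F \<subseteq> S} = card (A - F) choose (K - card F)"
    using assms(1) by (simp add: bij_betw_same_card n_subsets)
  with assms \<open>finite F\<close> show ?thesis by (simp add: card_Diff_subset)
qed

lemma binomial_diff_mult_power_le:
  assumes "m \<le> K" "K \<le> P"
  shows "real ((P - m) choose (K - m)) * real P ^ m \<le> real (P choose K) * real K ^ m"
  using assms(1)
proof (induction m)
  case 0
  then show ?case by simp
next
  case (Suc m)
  then have "m < K" by simp
  define c where "c = real ((P - m) choose (K - m))"
  define c' where "c' = real ((P - Suc m) choose (K - Suc m))"
  have "(K - m) * ((P - m) choose (K - m)) = (P - m) * ((P - Suc m) choose (K - Suc m))"
    using times_binomial_minus1_eq[of "K - m" "P - m"] \<open>m < K\<close>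
    by (simp only: zero_less_diff diff_diff_left Suc_eq_plus1)
  then have absorb: "real (P - m) * c' = real (K - m) * c"
    unfolding c_def c'_def by (metis of_nat_mult)
  have "real (K - m) * real P \<le> real K * real (P - m)"
    using \<open>m < K\<close> assms(2) by (simp add: of_nat_diff algebra_simps mult_right_mono)
  then have "real (K - m) * real P * c \<le> real K * real (P - m) * c"
    by (rule mult_right_mono) (simp add: c_def)
  then have "real (P - m) * (c' * real P) \<le> real (P - m) * (c * real K)"
    by (metis absorb mult.assoc mult.commute)
  then have "c' * real P \<le> c * real K"
    using \<open>m < K\<close> assms(2) by simp
  then have "c' * real P * real P ^ m \<le> c * real K * real P ^ m"
    by (rule mult_right_mono) simp
  then have "c' * real P ^ Suc m \<le> c * real P ^ m * real K"
    by (simp only: power_Suc mult_ac)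
  also have "\<dots> \<le> real (P choose K) * real K ^ Suc m"
    using Suc.IH \<open>m < K\<close> by (simp add: c_def mult_ac mult_right_mono)
  finally show ?case unfolding c'_def .
qed

lemma key_pmf_superset_prob_le:
  assumes "K \<le> P" "finite F"
  shows "measure_pmf.prob (key_pmf K P) {S. F \<subseteq> S} \<le> (real K / real P) ^ card F"
proof -
  define Keys where "Keys = {S. S \<subseteq> {1..P} \<and> card S = K}"
  have card_Keys: "card Keys = P choose K" unfolding Keys_def by (simp add: n_subsets)
  then have "card Keys > 0" using assms(1) by simp
  then have "Keys \<noteq> {}" "finite Keys" by (simp_all add: card_gt_0_iff)
  then have "measure_pmf.prob (key_pmf K P) {S. F \<subseteq> S}
      = real (card (Keys \<inter> {S. F \<subseteq> S})) / real (card Keys)"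
    unfolding key_pmf_def Keys_def by (rule measure_pmf_of_set)
  moreover have "Keys \<inter> {S. F \<subseteq> S} = {S. (S \<subseteq> {1..P} \<and> card S = K) \<and> F \<subseteq> S}"
    by (auto simp: Keys_def)
  ultimately have prob: "measure_pmf.prob (key_pmf K P) {S. F \<subseteq> S}
      = real (card {S. (S \<subseteq> {1..P} \<and> card S = K) \<and> F \<subseteq> S}) / real (P choose K)"
    by (simp add: card_Keys)
  show ?thesis
  proof (cases "F \<subseteq> {1..P} \<and> card F \<le> K")
    case True
    then have "card {S. (S \<subseteq> {1..P} \<and> card S = K) \<and> F \<subseteq> S} = (P - card F) choose (K - card F)"
      using card_supsets[of "{1..P}" F K] by simp
    moreover have "0 < real P ^ card F" "0 < real (P choose K)"
      using True assms(1) by (auto simp: gr0I)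
    ultimately show ?thesis
      using binomial_diff_mult_power_le[of "card F" K P] True assms(1)
      by (simp add: prob power_divide divide_simps mult_ac)
  next
    case False
    have "card F \<le> card S" if "F \<subseteq> S" "S \<subseteq> {1..P}" for S
      using that by (intro card_mono) (auto intro: finite_subset)
    with False have no_keys: "{S. (S \<subseteq> {1..P} \<and> card S = K) \<and> F \<subseteq> S} = {}" by force
    show ?thesis unfolding prob no_keys by simp
  qed
qed

lemma set_pmf_key_pmf:
  assumes "K \<le> P"
  shows "set_pmf (key_pmf K P) = {S. S \<subseteq> {1..P} \<and> card S = K}"
proof -
  have "card {S. S \<subseteq> {1..P} \<and> card S = K} > 0" using assms by (simp add: n_subsets)
  then have "{S. S \<subseteq> {1..P} \<and> card S = K} \<noteq> {}" "finite {S. S \<subseteq> {1..P} \<and> card S = K}"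
    by (simp_all add: card_gt_0_iff)
  then show ?thesis unfolding key_pmf_def by (rule set_pmf_of_set)
qed

lemma rkg_pmf_keys_subset:
  assumes "K \<le> P" "ks \<in> set_pmf (rkg_pmf n K P)" "x \<in> {1..n}"
  shows "ks x \<subseteq> {1..P}"
proof -
  have "ks \<in> PiE_dflt {1..n} {} (set_pmf \<circ> (\<lambda>_. key_pmf K P))"
    using set_Pi_pmf_subset'[of "{1..n}" "{}" "\<lambda>_. key_pmf K P"] assms(2)
    by (auto simp: rkg_pmf_def)
  with assms(1,3) show ?thesis by (simp add: PiE_dflt_def set_pmf_key_pmf)
qed

lemma rkg_pmf_prob_Pi:
  assumes "I \<subseteq> {1..n}"
  shows "measure_pmf.prob (rkg_pmf n K P) {ks. \<forall>x\<in>I. ks x \<in> B x}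
    = (\<Prod>x\<in>I. measure_pmf.prob (key_pmf K P) (B x))"
proof -
  define B' where "B' x = (if x \<in> I then B x else UNIV)" for x
  have "{ks. \<forall>x\<in>I. ks x \<in> B x} = Pi {1..n} B'"
    using assms by (auto simp: B'_def Pi_def)
  then have "measure_pmf.prob (rkg_pmf n K P) {ks. \<forall>x\<in>I. ks x \<in> B x}
      = (\<Prod>x\<in>{1..n}. measure_pmf.prob (key_pmf K P) (B' x))"
    by (simp add: rkg_pmf_def measure_Pi_pmf_Pi)
  also have "\<dots> = (\<Prod>x\<in>I. measure_pmf.prob (key_pmf K P) (B' x))"
    by (rule prod.mono_neutral_right) (use assms in \<open>auto simp: B'_def\<close>)
  also have "\<dots> = (\<Prod>x\<in>I. measure_pmf.prob (key_pmf K P) (B x))"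
    by (simp add: B'_def)
  finally show ?thesis .
qed

lemma rkg_pmf_prob_three:
  assumes "{i, j, k} \<subseteq> {1..n}" "i \<noteq> j" "i \<noteq> k" "j \<noteq> k"
  shows "measure_pmf.prob (rkg_pmf n K P) {ks. ks i \<in> Bi \<and> ks j \<in> Bj \<and> ks k \<in> Bk}
    = measure_pmf.prob (key_pmf K P) Bi * measure_pmf.prob (key_pmf K P) Bj *
      measure_pmf.prob (key_pmf K P) Bk"
proof -
  define B where "B x = (if x = i then Bi else if x = j then Bj else Bk)" for x
  have "{ks. ks i \<in> Bi \<and> ks j \<in> Bj \<and> ks k \<in> Bk} = {ks. \<forall>x\<in>{i, j, k}. ks x \<in> B x}"
    using assms by (auto simp: B_def)
  then show ?thesis
    using rkg_pmf_prob_Pi[OF assms(1), of K P B] assms by (simp add: B_def)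
qed

definition distinct_triples :: "'a set \<Rightarrow> ('a \<times> 'a \<times> 'a) set" where
  "distinct_triples A = {(a, b, c). a \<in> A \<and> b \<in> A \<and> c \<in> A \<and> a \<noteq> b \<and> a \<noteq> c \<and> b \<noteq> c}"

lemma distinct_triples_subset: "distinct_triples A \<subseteq> A \<times> A \<times> A"
  by (auto simp: distinct_triples_def)

lemma finite_distinct_triples: "finite A \<Longrightarrow> finite (distinct_triples A)"
  by (metis distinct_triples_subset finite_SigmaI finite_subset)

lemma card_distinct_triples_le:
  assumes "finite A"
  shows "card (distinct_triples A) \<le> card A ^ 3"
proof -
  have "card (distinct_triples A) \<le> card (A \<times> A \<times> A)"
    using assms by (intro card_mono distinct_triples_subset) simp
  then show ?thesis by (simp add: card_cartesian_product power3_eq_cube)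
qed

lemma pairwise_intersecting_cases:
  assumes "X \<inter> Y \<noteq> {}" "X \<inter> Z \<noteq> {}" "Y \<inter> Z \<noteq> {}" "X \<union> Y \<union> Z \<subseteq> U"
  obtains a where "a \<in> U" "a \<in> X" "a \<in> Y" "a \<in> Z"
  | a b c where "(a, b, c) \<in> distinct_triples U" "{a, c} \<subseteq> X" "{a, b} \<subseteq> Y" "{b, c} \<subseteq> Z"
proof -
  obtain a b c where abc: "a \<in> X \<inter> Y" "b \<in> Y \<inter> Z" "c \<in> X \<inter> Z" using assms(1-3) by blast
  then have "a \<in> U" "b \<in> U" "c \<in> U" using assms(4) by blast+
  show thesis
  proof (cases "a = b \<or> a = c \<or> b = c")
    case True
    with abc \<open>a \<in> U\<close> \<open>b \<in> U\<close> that(1) show thesis by blast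
  next
    case False
    with abc \<open>a \<in> U\<close> \<open>b \<in> U\<close> \<open>c \<in> U\<close> show thesis
      by (intro that(2)[of a b c]) (auto simp: distinct_triples_def)
  qed
qed

lemma rkg_pmf_pairwise_intersecting_prob_le:
  assumes "{i, j, k} \<subseteq> {1..n}" "i \<noteq> j" "i \<noteq> k" "j \<noteq> k" "K \<le> P"
  shows "measure_pmf.prob (rkg_pmf n K P)
      {ks. ks i \<inter> ks j \<noteq> {} \<and> ks i \<inter> ks k \<noteq> {} \<and> ks j \<inter> ks k \<noteq> {}} \<le> tau K P"
proof -
  let ?M = "rkg_pmf n K P" and ?q = "real K / real P"
  define E where "E = {ks :: nat \<Rightarrow> nat set. ks i \<inter> ks j \<noteq> {} \<and> ks i \<inter> ks k \<noteq> {} \<and> ks j \<inter> ks k \<noteq> {}}"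
  define common where "common a = {ks :: nat \<Rightarrow> nat set. ks i \<in> {S. a \<in> S} \<and> ks j \<in> {S. a \<in> S} \<and> ks k \<in> {S. a \<in> S}}" for a :: nat
  define cyclic where "cyclic t = (case t of (a, b, c) \<Rightarrow>
      {ks :: nat \<Rightarrow> nat set. ks i \<in> {S. a \<in> S \<and> c \<in> S} \<and> ks j \<in> {S. a \<in> S \<and> b \<in> S} \<and> ks k \<in> {S. b \<in> S \<and> c \<in> S}})"
    for t :: "nat \<times> nat \<times> nat"
  define D where "D = distinct_triples {1..P}"
  have "E \<inter> set_pmf ?M \<subseteq> (\<Union>a\<in>{1..P}. common a) \<union> (\<Union>t\<in>D. cyclic t)"
  proof
    fix ks assume ks: "ks \<in> E \<inter> set_pmf ?M"
    then have "ks i \<inter> ks j \<noteq> {}" "ks i \<inter> ks k \<noteq> {}" "ks j \<inter> ks k \<noteq> {}"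
      by (simp_all add: E_def)
    moreover have "ks i \<union> ks j \<union> ks k \<subseteq> {1..P}"
      using rkg_pmf_keys_subset[OF assms(5), of ks n] ks assms(1) by simp
    ultimately show "ks \<in> (\<Union>a\<in>{1..P}. common a) \<union> (\<Union>t\<in>D. cyclic t)"
    proof (rule pairwise_intersecting_cases)
      fix a assume "a \<in> {1..P}" "a \<in> ks i" "a \<in> ks j" "a \<in> ks k"
      then have "ks \<in> common a" unfolding common_def by simp
      with \<open>a \<in> {1..P}\<close> show ?thesis by (blast intro: UnI1)
    next
      fix a b c assume "(a, b, c) \<in> distinct_triples {1..P}"
        "{a, c} \<subseteq> ks i" "{a, b} \<subseteq> ks j" "{b, c} \<subseteq> ks k"
      then have "ks \<in> cyclic (a, b, c)" unfolding cyclic_def by simp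
      moreover have "(a, b, c) \<in> D" unfolding D_def by fact
      ultimately show ?thesis by (blast intro: UnI2)
    qed
  qed
  then have "measure_pmf.prob ?M E
      \<le> measure_pmf.prob ?M ((\<Union>a\<in>{1..P}. common a) \<union> (\<Union>t\<in>D. cyclic t))"
    unfolding measure_Int_set_pmf[of ?M E, symmetric] by (rule measure_pmf.finite_measure_mono) simp
  also have "\<dots> \<le> (\<Sum>a\<in>{1..P}. measure_pmf.prob ?M (common a)) + (\<Sum>t\<in>D. measure_pmf.prob ?M (cyclic t))"
    by (intro order.trans[OF measure_Un_le] add_mono measure_pmf.finite_measure_subadditive_finite)
      (simp_all add: D_def finite_distinct_triples)
  also have "\<dots> \<le> (\<Sum>a\<in>{1..P}. ?q ^ 3) + (\<Sum>t\<in>D. (?q ^ 2) ^ 3)"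
  proof (intro add_mono sum_mono)
    fix a :: nat
    have "measure_pmf.prob (key_pmf K P) {S. a \<in> S} \<le> ?q"
      using key_pmf_superset_prob_le[of K P "{a}"] assms(5) by simp
    then show "measure_pmf.prob ?M (common a) \<le> ?q ^ 3"
      unfolding common_def rkg_pmf_prob_three[OF assms(1-4)] power3_eq_cube
      by (intro mult_mono) simp_all
  next
    fix t assume "t \<in> D"
    then obtain a b c where t: "t = (a, b, c)" "a \<noteq> b" "a \<noteq> c" "b \<noteq> c"
      by (auto simp: D_def distinct_triples_def)
    have pair: "measure_pmf.prob (key_pmf K P) {S. x \<in> S \<and> y \<in> S} \<le> ?q ^ 2" if "x \<noteq> y" for x y
      using key_pmf_superset_prob_le[of K P "{x, y}"] assms(5) that by (simp add: power2_eq_square)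
    show "measure_pmf.prob ?M (cyclic t) \<le> (?q ^ 2) ^ 3"
      unfolding cyclic_def t(1) prod.case rkg_pmf_prob_three[OF assms(1-4)] power3_eq_cube
      using pair t(2-4) by (intro mult_mono) simp_all
  qed
  also have "\<dots> \<le> real P * ?q ^ 3 + real P ^ 3 * (?q ^ 2) ^ 3"
    using card_distinct_triples_le[of "{1..P}"]
    by (intro add_mono) (auto simp: D_def intro!: mult_right_mono simp flip: of_nat_power)
  also have "\<dots> = tau K P"
    by (cases "P = 0") (simp_all add: tau_def power_divide power3_eq_cube power2_eq_square)
  finally show ?thesis unfolding E_def .
qed

lemma triangles_pos_subset:
  "{ks. triangles n ks > 0} \<subseteq> (\<Union>(i, j, k)\<in>distinct_triples {1..n}.
      {ks. ks i \<inter> ks j \<noteq> {} \<and> ks i \<inter> ks k \<noteq> {} \<and> ks j \<inter> ks k \<noteq> {}})"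
proof
  fix ks assume "ks \<in> {ks. triangles n ks > 0}"
  then have "{T. T \<subseteq> {1..n} \<and> card T = 3 \<and> (\<forall>i\<in>T. \<forall>j\<in>T. i \<noteq> j \<longrightarrow> rkg_edge ks i j)} \<noteq> {}"
    unfolding triangles_def by (metis (no_types, lifting) card.empty less_irrefl mem_Collect_eq)
  then obtain T where T: "T \<subseteq> {1..n}" "card T = 3" "\<forall>i\<in>T. \<forall>j\<in>T. i \<noteq> j \<longrightarrow> rkg_edge ks i j"
    by blast
  then obtain x y z where xyz: "T = {x, y, z}" "x \<noteq> y" "y \<noteq> z" "x \<noteq> z"
    by (auto simp: card_3_iff)
  have "(x, y, z) \<in> distinct_triples {1..n}"
    using T(1) xyz by (auto simp: distinct_triples_def)
  moreover have "ks x \<inter> ks y \<noteq> {} \<and> ks x \<inter> ks z \<noteq> {} \<and> ks y \<inter> ks z \<noteq> {}"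
    using T(3) xyz by (auto simp: rkg_edge_def)
  ultimately show "ks \<in> (\<Union>(i, j, k)\<in>distinct_triples {1..n}.
      {ks. ks i \<inter> ks j \<noteq> {} \<and> ks i \<inter> ks k \<noteq> {} \<and> ks j \<inter> ks k \<noteq> {}})"
    by blast
qed

lemma rkg_pmf_triangles_pos_prob_le:
  assumes "K \<le> P"
  shows "measure_pmf.prob (rkg_pmf n K P) {ks. triangles n ks > 0} \<le> real n ^ 3 * tau K P"
proof -
  let ?M = "rkg_pmf n K P"
  let ?E = "\<lambda>(i, j, k). {ks. ks i \<inter> ks j \<noteq> {} \<and> ks i \<inter> ks k \<noteq> {} \<and> ks j \<inter> ks k \<noteq> {}}"
  have "measure_pmf.prob ?M {ks. triangles n ks > 0} \<le> measure_pmf.prob ?M (\<Union>t\<in>distinct_triples {1..n}. ?E t)"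
    using triangles_pos_subset by (intro measure_pmf.finite_measure_mono) simp_all
  also have "\<dots> \<le> (\<Sum>t\<in>distinct_triples {1..n}. measure_pmf.prob ?M (?E t))"
    by (intro measure_pmf.finite_measure_subadditive_finite) (simp_all add: finite_distinct_triples)
  also have "\<dots> \<le> (\<Sum>t\<in>distinct_triples {1..n}. tau K P)"
    using rkg_pmf_pairwise_intersecting_prob_le assms
    by (intro sum_mono) (auto simp: distinct_triples_def)
  also have "\<dots> \<le> real n ^ 3 * tau K P"
    using card_distinct_triples_le[of "{1..n}"]
    by (auto simp: tau_def intro!: mult_right_mono simp flip: of_nat_power)
  finally show ?thesis .
qed

theorem theorem1:
  fixes P K :: "nat \<Rightarrow> nat"
  assumes scaling: "\<And>n. 1 \<le> K n \<and> K n \<le> P n"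
    and lim: "(\<lambda>n. real n ^ 3 * tau (K n) (P n)) \<longlonglongrightarrow> 0"
  shows "(\<lambda>n. measure_pmf.prob (rkg_pmf n (K n) (P n)) {ks. triangles n ks > 0}) \<longlonglongrightarrow> 0"
proof (rule tendsto_sandwich[OF _ _ tendsto_const lim])
  show "\<forall>\<^sub>F n in sequentially. 0 \<le> measure_pmf.prob (rkg_pmf n (K n) (P n)) {ks. triangles n ks > 0}"
    by simp
  show "\<forall>\<^sub>F n in sequentially. measure_pmf.prob (rkg_pmf n (K n) (P n)) {ks. triangles n ks > 0}
      \<le> real n ^ 3 * tau (K n) (P n)"
    using rkg_pmf_triangles_pos_prob_le scaling by (simp add: always_eventually)
qed

end
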